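(* Let $(M,\varphi,\xi,\eta,g)$ be an almost contact metric manifold. If $M$ satisfies the $(G1)$ identity then it satisfies the $(G2)$ identity, and if it satisfies the $(G2)$ identity then it satisfies the $(G3)$ identity. Equivalently, for any class $\mathcal L$ of almost contact metric manifolds, denoting by $\mathcal L_i$ the subclass of those satisfying $(Gi)$, one has $\mathcal L_1\subseteq\mathcal L_2\subseteq\mathcal L_3\subseteq\mathcal L$.
   Context: An almost contact metric manifold $(M,\varphi,\xi,\eta,g)$: $\varphi$ a $(1,1)$-tensor, $\xi$ a vector field, $\eta$ a $1$-form, $g$ a Riemannian metric with $\eta(\xi)=1$, $\varphi^2=-I+\eta\otimes\xi$, $g(\varphi X,\varphi Y)=g(X,Y)-\eta(X)\eta(Y)$. Curvature conventions: $R_{XY}Z=\nabla_X\nabla_YZ-\nabla_Y\nabla_XZ-\nabla_{[X,Y]}Z$, $R(X,Y,Z,W)=-g(R_{XY}Z,W)$. For all $X,Y,Z,W\in\chi(M)$ the identities are: $(G1)$: $R(X,Y,\varphi Z,\varphi W)-R(X,Y,Z,W)=g(Y,\varphi W)g(X,\varphi Z)-g(X,\varphi W)g(Y,\varphi Z)+g(X,W)g(Y,Z)-g(Y,W)g(X,Z)$; $(G2)$: $R(X,Y,Z,W)=R(\varphi X,Y,Z,\varphi W)+R(X,\varphi Y,Z,\varphi W)+R(X,Y,\varphi Z,\varphi W)+g(X,Z)\eta(W)\eta(Y)-g(Z,Y)\eta(X)\eta(W)$; $(G3)$: $R(X,Y,Z,W)=R(\varphi X,\varphi Y,\varphi Z,\varphi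 W)+g(X,Z)\eta(W)\eta(Y)-g(Z,Y)\eta(X)\eta(W)+g(Y,W)\eta(X)\eta(Z)-g(X,W)\eta(Y)\eta(Z)$. *)

theory Defs
  imports "HOL-Analysis.Analysis"
begin

text \<open>Pointwise (tangent-space) model. V is the tangent space at a point, a finite-dimensional
real vector space. g is the metric at that point, a positive definite symmetric bilinear form.\<close>

definition metric_form :: "('a::real_vector \<Rightarrow> 'a \<Rightarrow> real) \<Rightarrow> bool" where
  "metric_form g \<longleftrightarrow> bilinear g \<and> (\<forall>X Y. g X Y = g Y X) \<and> (\<forall>X. X \<noteq> 0 \<longrightarrow> g X X > 0)"

definition almost_contact_metric ::
  "('a::real_vector \<Rightarrow> 'a) \<Rightarrow> 'a \<Rightarrow> ('a \<Rightarrow> real) \<Rightarrow> ('a \<Rightarrow> 'a \<Rightarrow> real) \<Rightarrow> bool" where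
  "almost_contact_metric phi xi eta g \<longleftrightarrow>
     linear phi \<and> linear eta \<and> metric_form g \<and> eta xi = 1 \<and>
     (\<forall>X. phi (phi X) = - X + eta X *\<^sub>R xi) \<and>
     (\<forall>X Y. g (phi X) (phi Y) = g X Y - eta X * eta Y)"

definition quadrilinear :: "('a::real_vector \<Rightarrow> 'a \<Rightarrow> 'a \<Rightarrow> 'a \<Rightarrow> real) \<Rightarrow> bool" where
  "quadrilinear R \<longleftrightarrow>
     (\<forall>Y Z W. linear (\<lambda>X. R X Y Z W)) \<and> (\<forall>X Z W. linear (\<lambda>Y. R X Y Z W)) \<and>
     (\<forall>X Y W. linear (\<lambda>Z. R X Y Z W)) \<and> (\<forall>X Y Z. linear (\<lambda>W. R X Y Z W))"

text \<open>The algebraic symmetries satisfied at each point by the Riemann curvature tensor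
  R(X,Y,Z,W) = - g(R_XY Z, W) of the Levi-Civita connection of g.\<close>
definition curvature_tensor :: "('a::real_vector \<Rightarrow> 'a \<Rightarrow> 'a \<Rightarrow> 'a \<Rightarrow> real) \<Rightarrow> bool" where
  "curvature_tensor R \<longleftrightarrow> quadrilinear R \<and>
     (\<forall>X Y Z W. R X Y Z W = - R Y X Z W) \<and>
     (\<forall>X Y Z W. R X Y Z W = - R X Y W Z) \<and>
     (\<forall>X Y Z W. R X Y Z W = R Z W X Y) \<and>
     (\<forall>X Y Z W. R X Y Z W + R Y Z X W + R Z X Y W = 0)"

definition G1 :: "('a::real_vector \<Rightarrow> 'a) \<Rightarrow> 'a \<Rightarrow> ('a \<Rightarrow> real) \<Rightarrow> ('a \<Rightarrow> 'a \<Rightarrow> real)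
     \<Rightarrow> ('a \<Rightarrow> 'a \<Rightarrow> 'a \<Rightarrow> 'a \<Rightarrow> real) \<Rightarrow> bool" where
  "G1 phi xi eta g R \<longleftrightarrow> (\<forall>X Y Z W.
     R X Y (phi Z) (phi W) - R X Y Z W =
       g Y (phi W) * g X (phi Z) - g X (phi W) * g Y (phi Z) + g X W * g Y Z - g Y W * g X Z)"

definition G2 :: "('a::real_vector \<Rightarrow> 'a) \<Rightarrow> 'a \<Rightarrow> ('a \<Rightarrow> real) \<Rightarrow> ('a \<Rightarrow> 'a \<Rightarrow> real)
     \<Rightarrow> ('a \<Rightarrow> 'a \<Rightarrow> 'a \<Rightarrow> 'a \<Rightarrow> real) \<Rightarrow> bool" where
  "G2 phi xi eta g R \<longleftrightarrow> (\<forall>X Y Z W.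
     R X Y Z W = R (phi X) Y Z (phi W) + R X (phi Y) Z (phi W) + R X Y (phi Z) (phi W)
       + g X Z * eta W * eta Y - g Z Y * eta X * eta W)"

definition G3 :: "('a::real_vector \<Rightarrow> 'a) \<Rightarrow> 'a \<Rightarrow> ('a \<Rightarrow> real) \<Rightarrow> ('a \<Rightarrow> 'a \<Rightarrow> real)
     \<Rightarrow> ('a \<Rightarrow> 'a \<Rightarrow> 'a \<Rightarrow> 'a \<Rightarrow> real) \<Rightarrow> bool" where
  "G3 phi xi eta g R \<longleftrightarrow> (\<forall>X Y Z W.
     R X Y Z W = R (phi X) (phi Y) (phi Z) (phi W)
       + g X Z * eta W * eta Y - g Z Y * eta X * eta W
       + g Y W * eta X * eta Z - g X W * eta Y * eta Z)"

end

theory Submission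
  imports Defs
begin

text \<open>Feeding \<open>W = \<xi>\<close> into (G1) or (G2) pins down \<open>R(X,Y,Z,\<xi>) = \<eta>(Y) g(X,Z) - \<eta>(X) g(Y,Z)\<close>.
  For (G1)\<open>\<Rightarrow>\<close>(G2), (G1) with \<open>\<phi> W\<close> in the last slot expresses
  \<open>R(X,Y,\<phi>Z,W) + R(X,Y,Z,\<phi>W)\<close> through \<open>g\<close>; by pair symmetry the two mixed terms of (G2) are such
  a sum, and (G1) itself supplies the remaining term.
  For (G2)\<open>\<Rightarrow>\<close>(G3), apply (G2) to \<open>(\<phi> X, \<phi> Y, Z, W)\<close> and simplify with
  \<open>\<phi>\<^sup>2 = -I + \<eta> \<otimes> \<xi>\<close>; adding the resulting identity to its image under pair symmetry cancels
  the mixed terms and leaves twice (G3).\<close>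

locale almost_contact_metric_space =
  fixes phi :: "'a::real_vector \<Rightarrow> 'a" and xi :: 'a and eta :: "'a \<Rightarrow> real"
    and g :: "'a \<Rightarrow> 'a \<Rightarrow> real"
  assumes acm: "almost_contact_metric phi xi eta g"
begin

lemma linear_phi: "linear phi"
  and linear_eta: "linear eta"
  and eta_xi: "eta xi = 1"
  and phi_phi: "phi (phi X) = - X + eta X *\<^sub>R xi"
  and g_phi_phi [simp]: "g (phi X) (phi Y) = g X Y - eta X * eta Y"
  using acm unfolding almost_contact_metric_def by auto

lemma g_sym: "g X Y = g Y X"
  and g_linear_right: "linear (g X)"
  and g_linear_left: "linear (\<lambda>Y. g Y X)"
  using acm unfolding almost_contact_metric_def metric_form_def bilinear_def by auto

lemma g_zero_right [simp]: "g X 0 = 0"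
  and g_zero_left [simp]: "g 0 X = 0"
  using linear_0[OF g_linear_right] linear_0[OF g_linear_left] by auto

lemma xi_nonzero: "xi \<noteq> 0"
  using eta_xi linear_0[OF linear_eta] by auto

text \<open>Applying \<open>\<phi>\<close> to \<open>\<phi>\<^sup>2 X\<close> in two ways shows \<open>\<eta>(X) \<phi>\<xi> = \<eta>(\<phi>X) \<xi>\<close>; then \<open>\<phi>\<xi>\<close> is a
  multiple \<open>c \<xi>\<close> with \<open>c\<^sup>2 \<xi> = \<phi>\<^sup>2 \<xi> = 0\<close>.\<close>
lemma eta_scale_phi_xi: "eta X *\<^sub>R phi xi = eta (phi X) *\<^sub>R xi"
proof -
  have "phi (phi (phi X)) = - phi X + eta X *\<^sub>R phi xi"
    using linear_phi by (simp add: phi_phi linear_diff linear_scale)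
  moreover have "phi (phi (phi X)) = - phi X + eta (phi X) *\<^sub>R xi"
    by (rule phi_phi)
  ultimately show ?thesis by simp
qed

lemma phi_xi [simp]: "phi xi = 0"
proof -
  define c where "c = eta (phi xi)"
  have phi_xi_eq: "phi xi = c *\<^sub>R xi"
    using eta_scale_phi_xi[of xi] eta_xi by (simp add: c_def)
  have "(c * c) *\<^sub>R xi = phi (phi xi)"
    using linear_phi by (simp add: phi_xi_eq linear_scale)
  also have "\<dots> = 0"
    using eta_xi by (simp add: phi_phi)
  finally have "c = 0"
    using xi_nonzero by simp
  then show ?thesis
    by (simp add: phi_xi_eq)
qed

lemma eta_phi [simp]: "eta (phi X) = 0"
  using eta_scale_phi_xi[of X] xi_nonzero by simp

lemma eta_eq_g_xi: "eta X = g X xi"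
  using g_phi_phi[of xi X] eta_xi g_sym[of xi X] by simp

lemma g_phi_phi_right [simp]: "g X (phi (phi Y)) = - g X Y + eta Y * eta X"
  using g_linear_right[of X]
  by (simp add: phi_phi linear_diff linear_scale eta_eq_g_xi g_sym[of xi])

lemma g_phi_skew: "g (phi X) Y = - g X (phi Y)"
  using g_phi_phi_right[of "phi X" Y] g_phi_phi[of X "phi Y"] by simp

lemma g_phi_antisym: "g X (phi Y) = - g Y (phi X)"
  using g_phi_skew[of Y X] g_sym[of "phi Y" X] by simp

end

locale almost_contact_metric_curvature =
  almost_contact_metric_space phi xi eta g for phi :: "'a::real_vector \<Rightarrow> 'a" and xi eta g +
  fixes R :: "'a::real_vector \<Rightarrow> 'a \<Rightarrow> 'a \<Rightarrow> 'a \<Rightarrow> real"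
  assumes curvature: "curvature_tensor R"
begin

lemma R_skew_left: "R X Y Z W = - R Y X Z W"
  and R_skew_right: "R X Y Z W = - R X Y W Z"
  and R_pair_sym: "R X Y Z W = R Z W X Y"
  using curvature unfolding curvature_tensor_def by blast+

lemma R_linear_slots:
  "linear (\<lambda>X. R X Y Z W)" "linear (\<lambda>Y. R X Y Z W)"
  "linear (\<lambda>Z. R X Y Z W)" "linear (\<lambda>W. R X Y Z W)"
proof -
  have "quadrilinear R"
    using curvature by (simp add: curvature_tensor_def)
  then show "linear (\<lambda>X. R X Y Z W)" "linear (\<lambda>Y. R X Y Z W)"
    "linear (\<lambda>Z. R X Y Z W)" "linear (\<lambda>W. R X Y Z W)"
    by (simp_all add: quadrilinear_def)
qed

lemma R_zero [simp]: "R 0 Y Z W = 0" "R X 0 Z W = 0" "R X Y 0 W = 0" "R X Y Z 0 = 0"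
  by (simp_all add: R_linear_slots[THEN linear_0])

lemma R_phi_phi_1: "R (phi (phi X)) Y Z W = - R X Y Z W + eta X * R xi Y Z W"
  and R_phi_phi_2: "R X (phi (phi Y)) Z W = - R X Y Z W + eta Y * R X xi Z W"
  and R_phi_phi_4: "R X Y Z (phi (phi W)) = - R X Y Z W + eta W * R X Y Z xi"
  using R_linear_slots[THEN linear_diff] R_linear_slots[THEN linear_scale]
  by (simp_all add: phi_phi)

lemma G1_R_xi:
  assumes "G1 phi xi eta g R"
  shows "R X Y Z xi = eta Y * g X Z - eta X * g Y Z"
  using assms[unfolded G1_def, rule_format, of X Y Z xi]
  by (simp add: eta_eq_g_xi g_sym[of xi])

lemma G2_R_xi:
  assumes "G2 phi xi eta g R"
  shows "R X Y Z xi = eta Y * g X Z - eta X * g Y Z"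
  using assms[unfolded G2_def, rule_format, of X Y Z xi]
  by (simp add: eta_xi g_sym[of Z Y])

lemma G1_imp_G2:
  assumes G1: "G1 phi xi eta g R"
  shows "G2 phi xi eta g R"
  unfolding G2_def
proof (intro allI)
  fix X Y Z W
  have G1': "R X Y (phi Z) (phi W) - R X Y Z W =
      g Y (phi W) * g X (phi Z) - g X (phi W) * g Y (phi Z) + g X W * g Y Z - g Y W * g X Z"
    for X Y Z W using G1 unfolding G1_def by blast
  have mixed: "R X Y (phi Z) W + R X Y Z (phi W) =
      - (g Y (phi (phi W)) * g X (phi Z) - g X (phi (phi W)) * g Y (phi Z)
         + g X (phi W) * g Y Z - g Y (phi W) * g X Z)
      + eta W * (eta Y * g X (phi Z) - eta X * g Y (phi Z))" for X Y Z W
    using G1'[of X Y Z "phi W"] G1_R_xi[OF G1, of X Y "phi Z"] by (simp add: R_phi_phi_4)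
  have "R (phi X) Y Z (phi W) + R X (phi Y) Z (phi W)
      = R Z (phi W) (phi X) Y + R Z (phi W) X (phi Y)"
    using R_pair_sym[of "phi X" Y Z "phi W"] R_pair_sym[of X "phi Y" Z "phi W"] by linarith
  with mixed[of Z "phi W" X Y] G1'[of X Y Z W]
  show "R X Y Z W = R (phi X) Y Z (phi W) + R X (phi Y) Z (phi W) + R X Y (phi Z) (phi W)
      + g X Z * eta W * eta Y - g Z Y * eta X * eta W"
    by (simp add: g_phi_skew g_phi_antisym[of W Y] g_phi_antisym[of Z X] g_phi_antisym[of Z Y]
        g_phi_antisym[of W X] g_sym[of W Y] g_sym[of Z X] g_sym[of W X] g_sym[of Z Y]
        algebra_simps)
qed

lemma G2_R_xi_phi_phi:
  assumes "G2 phi xi eta g R"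
  shows "R xi (phi Y) Z (phi W) = eta Z * (g W Y - eta W * eta Y)"
proof -
  have "R xi (phi Y) Z (phi W) = - R Z (phi W) (phi Y) xi"
    using R_pair_sym[of xi "phi Y" Z "phi W"] R_skew_right[of Z "phi W" xi "phi Y"] by simp
  then show ?thesis
    using G2_R_xi[OF assms, of Z "phi W" "phi Y"] by simp
qed

text \<open>(G2) at \<open>(\<phi> X, \<phi> Y, Z, W)\<close>, with \<open>\<phi>\<^sup>2\<close> eliminated and (G2) at \<open>(X, Y, Z, W)\<close> substituted.\<close>
lemma G2_R_phi_phi:
  assumes G2: "G2 phi xi eta g R"
  shows "R (phi X) (phi Y) Z W = - R X Y Z W + R X Y (phi Z) (phi W)
      + g X Z * eta W * eta Y - g Z Y * eta X * eta W
      + eta X * R xi (phi Y) Z (phi W) + eta Y * R (phi X) xi Z (phi W)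
      + R (phi X) (phi Y) (phi Z) (phi W)"
proof -
  have G2': "R X Y Z W = R (phi X) Y Z (phi W) + R X (phi Y) Z (phi W) + R X Y (phi Z) (phi W)
      + g X Z * eta W * eta Y - g Z Y * eta X * eta W" for X Y Z W
    using G2 unfolding G2_def by blast
  have "R (phi X) (phi Y) Z W = R (phi (phi X)) (phi Y) Z (phi W)
      + R (phi X) (phi (phi Y)) Z (phi W) + R (phi X) (phi Y) (phi Z) (phi W)"
    using G2'[of "phi X" "phi Y" Z W] by simp
  then show ?thesis
    using G2'[of X Y Z W] R_phi_phi_1[of X "phi Y" Z "phi W"] R_phi_phi_2[of "phi X" Y Z "phi W"]
    by linarith
qed

lemma G2_imp_G3:
  assumes G2: "G2 phi xi eta g R"
  shows "G3 phi xi eta g R"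
  unfolding G3_def
proof (intro allI)
  fix X Y Z W
  have R_phi_xi: "R (phi X) xi Z (phi W) = - (eta Z * (g W X - eta W * eta X))" for X Z W
    using R_skew_left[of "phi X" xi Z "phi W"] G2_R_xi_phi_phi[OF G2, of X Z W] by simp
  have "2 * R X Y Z W = 2 * R (phi X) (phi Y) (phi Z) (phi W)
      + g X Z * eta W * eta Y - g Z Y * eta X * eta W
      + g Z X * eta Y * eta W - g X W * eta Z * eta Y
      + eta X * R xi (phi Y) Z (phi W) + eta Y * R (phi X) xi Z (phi W)
      + eta Z * R xi (phi W) X (phi Y) + eta W * R (phi Z) xi X (phi Y)"
    using G2_R_phi_phi[OF G2, of X Y Z W] G2_R_phi_phi[OF G2, of Z W X Y]
      R_pair_sym[of "phi X" "phi Y" Z W] R_pair_sym[of X Y "phi Z" "phi W"]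
      R_pair_sym[of Z W X Y] R_pair_sym[of "phi Z" "phi W" "phi X" "phi Y"]
    by linarith
  then show "R X Y Z W = R (phi X) (phi Y) (phi Z) (phi W)
      + g X Z * eta W * eta Y - g Z Y * eta X * eta W
      + g Y W * eta X * eta Z - g X W * eta Y * eta Z"
    by (simp add: G2_R_xi_phi_phi[OF G2] R_phi_xi g_sym[of W Y] g_sym[of Z X] g_sym[of W X]
        g_sym[of Z Y] g_sym[of Y X] g_sym[of W Z] algebra_simps)
qed

end

theorem mainTheorem5:
  fixes phi :: "'a::euclidean_space \<Rightarrow> 'a" and xi :: 'a and eta :: "'a \<Rightarrow> real"
    and g :: "'a \<Rightarrow> 'a \<Rightarrow> real" and R :: "'a \<Rightarrow> 'a \<Rightarrow> 'a \<Rightarrow> 'a \<Rightarrow> real"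
  assumes "almost_contact_metric phi xi eta g"
    and "curvature_tensor R"
  shows "(G1 phi xi eta g R \<longrightarrow> G2 phi xi eta g R) \<and> (G2 phi xi eta g R \<longrightarrow> G3 phi xi eta g R)"
proof -
  interpret almost_contact_metric_curvature phi xi eta g R
    using assms by unfold_locales
  show ?thesis
    using G1_imp_G2 G2_imp_G3 by blast
qed

end
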